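(* Let $J$ and $K$ be finite sets, let $X=(X_j)_{j\in J}$ be a family of symmetric lists of elements of $K$, and let $k\in K$. Then \[\lVert\mathcal D_{J,K}(X)(k)\rVert=\sum_{j\in J}\mathfrak c\big(k,\lVert X_j\rVert\big)\cdot\{j\}.\]
   Context: $\mathrm{SList}(C)$ denotes the category of symmetric lists on a set $C$ (objects finite lists of elements of $C$, morphisms generated by adjacent swaps $\mathrm{sw}_{a,b,l}:a::b::l\to b::a::l$ and consing $x::_mf$, subject to functoriality, naturality, $\mathrm{sw}_{b,a,l}\mathrm{sw}_{a,b,l}=\mathrm{Id}$ and the hexagon relation). $\mathrm{I}_C:\mathrm{SList}(C)\to\mathrm{Core}(\mathrm{Fin}_{/C})$ is the equivalence sending a list $L$ to its index set $\{0,\dots,\mathrm{length}(L)-1\}$ with the map $i\mapsto L[i]$ (morphisms go to the corresponding bijections of index sets). $\mathrm{Fib}_C:\mathrm{Core}(\mathrm{Fin}_{/C})\to\mathrm{Core}(\mathrm{Fin})^C$ sends a set over $C$ to its family of fibers; it is an equivalence with inverse taking disjoint unions. The duality functor $\mathcal D_{J,K}:\mathrm{SList}(K)^J\to\mathrm{SList}(J)^K$ is the composite $\mathrm{SList}(K)^J\xrightarrow{\mathrm I_K}\mathrm{Core}(\mathrm{Fin}_{/K})^J\xrightarrow{\mathrm{Fib}_K}(\mathrm{Core}(\mathrm{Fin})^K)^J\cong(\mathrm{Core}(\mathrm{Fin})^J)^K\xrightarrow{\mathrm{Fib}_J^{-1}}\mathrm{Core}(\mathrm{Fin}_{/J})^K\xrightarrow{\mathrm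 I_J^{-1}}\mathrm{SList}(J)^K$ (middle map: swapping the two variables). $\lVert X\rVert$ is the underlying multiset of a symmetric list, $\mathfrak c(k,M)$ the multiplicity of $k$ in a multiset $M$, and $\{j\}$ the multiset with single element $j$ of multiplicity one. *)

theory Defs
  imports Main "HOL-Library.Multiset"
begin

text \<open>Objects of Core(Fin_{/C}) are represented as pairs (A, f) of a finite carrier A
  and a map f : A -> C.  Objects of SList(C) are lists over C.\<close>

definition I_obj :: "'c list \<Rightarrow> nat set \<times> (nat \<Rightarrow> 'c)" where
  "I_obj L = ({..<length L}, \<lambda>i. L ! i)"

definition Fib :: "'a set \<times> ('a \<Rightarrow> 'c) \<Rightarrow> 'c \<Rightarrow> 'a set" where
  "Fib Af c = {a \<in> fst Af. snd Af a = c}"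

definition Fib_inv :: "'j set \<Rightarrow> ('j \<Rightarrow> 'a set) \<Rightarrow> ('j \<times> 'a) set \<times> ('j \<times> 'a \<Rightarrow> 'j)" where
  "Fib_inv J F = (SIGMA j:J. F j, fst)"

definition iso_over :: "'a set \<times> ('a \<Rightarrow> 'c) \<Rightarrow> 'b set \<times> ('b \<Rightarrow> 'c) \<Rightarrow> bool" where
  "iso_over Af Bg = (\<exists>b. bij_betw b (fst Af) (fst Bg) \<and> (\<forall>a\<in>fst Af. snd Bg (b a) = snd Af a))"

text \<open>L is (a choice of) the value of D_{J,K}(X)(k): I_J^{-1} is an inverse equivalence,
  so its value on an object is determined up to isomorphism, i.e. L is any list with
  I_J(L) isomorphic (over J) to Fib_J^{-1}((Fib_K(I_K(X_j))(k))_{j in J}).\<close>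
definition is_D_obj :: "'j set \<Rightarrow> ('j \<Rightarrow> 'k list) \<Rightarrow> 'k \<Rightarrow> 'j list \<Rightarrow> bool" where
  "is_D_obj J X k L = iso_over (I_obj L) (Fib_inv J (\<lambda>j. Fib (I_obj (X j)) k))"

end

theory Submission
  imports Defs
begin

text \<open>An isomorphism over J preserves the size of every fibre. Hence the multiplicity of j
  in L is the size of the fibre over j of the disjoint union of the fibres of I(X j) over k,
  which is the number of positions of k in X j.\<close>

lemma card_Fib_I_obj: "card (Fib (I_obj xs) c) = count (mset xs) c"
  by (simp add: Fib_def I_obj_def count_mset count_list_eq_length_filter
      length_filter_conv_card eq_commute)

lemma iso_over_card_Fib:
  assumes "iso_over Af Bg"
  shows "card (Fib Af c) = card (Fib Bg c)"
proof -
  obtain b where b: "bij_betw b (fst Af) (fst Bg)"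
    and over: "\<forall>a\<in>fst Af. snd Bg (b a) = snd Af a"
    using assms unfolding iso_over_def by blast
  have "b ` Fib Af c = Fib Bg c"
  proof
    show "b ` Fib Af c \<subseteq> Fib Bg c"
      using b over unfolding Fib_def bij_betw_def by auto
    show "Fib Bg c \<subseteq> b ` Fib Af c"
    proof
      fix y assume "y \<in> Fib Bg c"
      then obtain x where "x \<in> fst Af" "y = b x" "snd Bg y = c"
        using b unfolding Fib_def bij_betw_def by auto
      then show "y \<in> b ` Fib Af c"
        using over unfolding Fib_def by auto
    qed
  qed
  moreover have "inj_on b (Fib Af c)"
    using b unfolding bij_betw_def Fib_def by (auto intro: inj_on_subset)
  ultimately show ?thesis
    by (metis card_image)
qed

lemma Fib_Fib_inv: "Fib (Fib_inv J F) j = (if j \<in> J then {j} \<times> F j else {})"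
  by (auto simp: Fib_def Fib_inv_def)

lemma card_Fib_Fib_inv: "card (Fib (Fib_inv J F) j) = (if j \<in> J then card (F j) else 0)"
  by (simp add: Fib_Fib_inv card_cartesian_product)

theorem lemma4p9:
  fixes J :: "'j set" and K :: "'k set" and X :: "'j \<Rightarrow> 'k list" and k :: 'k and L :: "'j list"
  assumes "finite J" and "finite K"
    and "\<forall>j\<in>J. set (X j) \<subseteq> K"
    and "k \<in> K"
    and "is_D_obj J X k L"
  shows "mset L = (\<Sum>j\<in>J. repeat_mset (count (mset (X j)) k) {#j#})"
proof (rule multiset_eqI)
  fix j
  have "count (mset L) j = card (Fib (I_obj L) j)"
    by (rule card_Fib_I_obj [symmetric])
  also have "\<dots> = card (Fib (Fib_inv J (\<lambda>j. Fib (I_obj (X j)) k)) j)"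
    using assms(5) unfolding is_D_obj_def by (rule iso_over_card_Fib)
  also have "\<dots> = (if j \<in> J then count (mset (X j)) k else 0)"
    by (simp add: card_Fib_Fib_inv card_Fib_I_obj)
  also have "\<dots> = count (\<Sum>j\<in>J. repeat_mset (count (mset (X j)) k) {#j#}) j"
    using assms(1) by (simp add: count_sum)
  finally show "count (mset L) j = count (\<Sum>j\<in>J. repeat_mset (count (mset (X j)) k) {#j#}) j" .
qed

end
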